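(* Let $\mu \colon \mathbb{R}^d\setminus\{0\} \to \mathbb{R}$ be a $C^2$ function, positively homogeneous of degree $m \ge 2$, such that $\det \nabla^2 \mu(x) \ne 0$ whenever $|x|=1$. Then for every $x_0 \in \mathbb{R}^d$ with $|x_0|=1$ there exist an open conic neighbourhood $\Gamma \subset \mathbb{R}^d\setminus\{0\}$ of $x_0$ and a constant $C>0$ such that \[ |\nabla \mu(x)-\nabla \mu(y)| \ge C |x-y|\,(|x|^{m-2}+|y|^{m-2}) \qquad \text{for all } x,y \in \Gamma. \]
   Context: A set $\Gamma\subset\mathbb{R}^d\setminus\{0\}$ is conic if $\lambda x\in\Gamma$ for all $x\in\Gamma$ and $\lambda>0$. *)

theory Defs
  imports "HOL-Analysis.Analysis"
begin

definition conic :: "('a::real_vector) set \<Rightarrow> bool" where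
  "conic \<Gamma> \<longleftrightarrow> \<Gamma> \<subseteq> - {0} \<and> (\<forall>x\<in>\<Gamma>. \<forall>c>0. c *\<^sub>R x \<in> \<Gamma>)"

end

(*
  Differentiating the homogeneity relation shows that grad mu and the Hessian H are
  positively homogeneous of degrees m - 1 and m - 2, and Euler's identity
  H(x0) x0 = (m - 1) grad mu(x0) shows grad mu(x0) <> 0.  Since H(x0) is invertible,
  |H(x0) v| >= kappa |v|.  By continuity there is a narrow convex cone around x0 on whose
  unit vectors H stays within kappa/2 of H(x0) and |grad mu| stays between a and 3a.
  Let x, y lie in the cone with |y| <= |x|.  If |y| <= |x|/6, homogeneity makes
  |grad mu(x)| ~ |x|^(m-1) dominate |grad mu(y)|.  Otherwise the segment from y to x keeps
  a distance of order |x| from the origin, and the mean value theorem applied to the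
  component of grad mu along H(x0)(x - y) gives a lower bound of order |x|^(m-2) |x - y|.
*)
theory Submission
  imports Defs
begin

definition positively_homogeneous :: "real \<Rightarrow> ('a::real_vector \<Rightarrow> 'b::real_vector) \<Rightarrow> bool" where
  "positively_homogeneous k f \<longleftrightarrow> (\<forall>x t. x \<noteq> 0 \<longrightarrow> t > 0 \<longrightarrow> f (t *\<^sub>R x) = t powr k *\<^sub>R f x)"

lemma positively_homogeneousD:
  "positively_homogeneous k f \<Longrightarrow> x \<noteq> 0 \<Longrightarrow> t > 0 \<Longrightarrow> f (t *\<^sub>R x) = t powr k *\<^sub>R f x"
  by (simp add: positively_homogeneous_def)

lemma positively_homogeneous_sgn:
  assumes "positively_homogeneous k f" and "x \<noteq> 0"
  shows "f x = norm x powr k *\<^sub>R f (sgn x)"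
  using positively_homogeneousD[OF assms(1), of "sgn x" "norm x"] assms(2)
  by (simp add: sgn_div_norm)

lemma positively_homogeneous_derivative:
  fixes f :: "'a::real_normed_vector \<Rightarrow> 'b::real_normed_vector"
  assumes hom: "positively_homogeneous k f"
    and der: "\<And>x. x \<noteq> 0 \<Longrightarrow> (f has_derivative D x) (at x)"
  shows "positively_homogeneous (k - 1) (\<lambda>x. D x h)"
  unfolding positively_homogeneous_def
proof (intro allI impI)
  fix x :: 'a and t :: real
  assume x: "x \<noteq> 0" and t: "t > 0"
  have "((\<lambda>y. f (t *\<^sub>R y)) has_derivative (\<lambda>v. D (t *\<^sub>R x) (t *\<^sub>R v))) (at x)"
    using has_derivative_compose[OF has_derivative_scaleR_right[OF has_derivative_ident] der] x t
    by simp
  moreover have "((\<lambda>y. f (t *\<^sub>R y)) has_derivative (\<lambda>v. t powr k *\<^sub>R D x v)) (at x)"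
    by (rule has_derivative_transform_within_open[of _ _ _ _ "- {0}"])
      (use x t hom der in \<open>auto simp: positively_homogeneousD intro: has_derivative_scaleR_right\<close>)
  ultimately have "D (t *\<^sub>R x) (t *\<^sub>R h) = t powr k *\<^sub>R D x h"
    by (metis has_derivative_unique)
  moreover have "D (t *\<^sub>R x) (t *\<^sub>R h) = t *\<^sub>R D (t *\<^sub>R x) h"
    using has_derivative_linear[OF der[of "t *\<^sub>R x"]] x t by (simp add: linear.scaleR)
  moreover have "t powr k = t * t powr (k - 1)"
    using t by (simp add: powr_diff)
  ultimately show "D (t *\<^sub>R x) h = t powr (k - 1) *\<^sub>R D x h"
    using t by (metis scaleR_scaleR scaleR_cancel_left less_irrefl)
qed

lemma positively_homogeneous_euler:
  fixes f :: "'a::real_normed_vector \<Rightarrow> 'b::real_normed_vector"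
  assumes hom: "positively_homogeneous k f" and x: "x \<noteq> 0"
    and der: "(f has_derivative D) (at x)"
  shows "D x = k *\<^sub>R f x"
proof -
  have ray: "((\<lambda>s::real. s *\<^sub>R x) has_derivative (\<lambda>s. s *\<^sub>R x)) (at 1)"
    by (auto intro!: derivative_eq_intros)
  have "((\<lambda>s. f (s *\<^sub>R x)) has_derivative (\<lambda>s. D (s *\<^sub>R x))) (at 1)"
    using has_derivative_compose[OF ray, of f D] der by simp
  moreover have "((\<lambda>s. s powr k *\<^sub>R f x) has_derivative (\<lambda>s. (s * k) *\<^sub>R f x)) (at 1)"
    by (auto intro!: derivative_eq_intros)
  then have "((\<lambda>s. f (s *\<^sub>R x)) has_derivative (\<lambda>s. (s * k) *\<^sub>R f x)) (at 1)"
    by (rule has_derivative_transform_within_open[of _ _ _ _ "{0<..}"])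
      (use hom x in \<open>auto simp: positively_homogeneousD\<close>)
  ultimately have "(\<lambda>s. D (s *\<^sub>R x)) = (\<lambda>s. (s * k) *\<^sub>R f x)"
    by (rule has_derivative_unique)
  from fun_cong[OF this, of 1] show ?thesis by simp
qed

lemma positively_homogeneous_gradient:
  fixes g :: "'a::real_inner \<Rightarrow> 'a"
  assumes "\<And>h. positively_homogeneous k (\<lambda>x. g x \<bullet> h)"
  shows "positively_homogeneous k g"
  unfolding positively_homogeneous_def
proof (intro allI impI)
  fix x :: 'a and t :: real
  assume "x \<noteq> 0" "t > 0"
  then have "g (t *\<^sub>R x) \<bullet> h = (t powr k *\<^sub>R g x) \<bullet> h" for h
    using positively_homogeneousD[OF assms] by simp
  then show "g (t *\<^sub>R x) = t powr k *\<^sub>R g x"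
    using vector_eq_rdot by blast
qed

lemma norm_matrix_vector_mult_le:
  fixes A :: "real^'n^'m"
  shows "norm (A *v v) \<le> norm A * norm v"
proof -
  have "norm (A *v v) = L2_set (\<lambda>i. \<bar>A $ i \<bullet> v\<bar>) UNIV"
    by (simp add: norm_vec_def matrix_mult_dot)
  also have "\<dots> \<le> L2_set (\<lambda>i. norm (A $ i) * norm v) UNIV"
    by (rule L2_set_mono) (auto intro: Cauchy_Schwarz_ineq2)
  also have "\<dots> = norm A * norm v"
    by (simp add: norm_vec_def L2_set_left_distrib)
  finally show ?thesis .
qed

lemma inner_sgn_matrix_vector_ge:
  fixes H H0 :: "real^'n^'m"
  assumes below: "\<kappa> * norm v \<le> norm (H0 *v v)" and close: "norm (H - H0) \<le> \<kappa> / 2"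
  shows "\<kappa> / 2 * norm v \<le> sgn (H0 *v v) \<bullet> (H *v v)"
proof -
  let ?w = "sgn (H0 *v v)"
  have "norm ((H - H0) *v v) \<le> \<kappa> / 2 * norm v"
    using norm_matrix_vector_mult_le[of "H - H0" v] close
    by (meson mult_right_mono norm_ge_zero order_trans)
  moreover have "\<bar>?w \<bullet> ((H - H0) *v v)\<bar> \<le> norm ((H - H0) *v v)"
    using Cauchy_Schwarz_ineq2[of ?w "(H - H0) *v v"]
      mult_right_mono[of "norm ?w" 1 "norm ((H - H0) *v v)"]
    by (simp add: norm_sgn split: if_splits)
  moreover have "?w \<bullet> (H0 *v v) = norm (H0 *v v)"
    by (cases "H0 *v v = 0") (simp_all add: sgn_div_norm dot_square_norm power2_eq_square)
  moreover have "?w \<bullet> (H *v v) = ?w \<bullet> (H0 *v v) + ?w \<bullet> ((H - H0) *v v)"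
    by (simp add: matrix_vector_mult_diff_rdistrib inner_diff_right)
  ultimately show ?thesis
    using below by linarith
qed

lemma norm_diff_ge_inner_derivative:
  fixes g :: "'a::real_normed_vector \<Rightarrow> 'b::real_inner"
  assumes der: "\<And>z. z \<in> closed_segment y x \<Longrightarrow> (g has_derivative D z) (at z)"
    and w: "norm w \<le> 1"
    and bound: "\<And>z. z \<in> closed_segment y x \<Longrightarrow> c \<le> w \<bullet> D z (x - y)"
  shows "c \<le> norm (g x - g y)"
proof -
  define p where "p s = (1 - s) *\<^sub>R y + s *\<^sub>R x" for s :: real
  have p_segment: "p s \<in> closed_segment y x" if "0 \<le> s" "s \<le> 1" for s
    using that unfolding p_def in_segment by blast
  have "((\<lambda>s. w \<bullet> g (p s)) has_derivative (\<lambda>h. w \<bullet> D (p s) (h *\<^sub>R (x - y))))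
          (at s within {0..1})" if "0 \<le> s" "s \<le> 1" for s
  proof -
    have "(p has_derivative (\<lambda>h. h *\<^sub>R (x - y))) (at s)"
      unfolding p_def by (rule derivative_eq_intros refl)+ (simp add: algebra_simps)
    from has_derivative_inner_right[OF has_derivative_compose[OF this der[OF p_segment[OF that]]]]
    show ?thesis
      by (rule has_derivative_subset) simp
  qed
  from mvt_very_simple[OF zero_le_one this] obtain s where "0 \<le> s" "s \<le> 1"
    and "w \<bullet> g (p 1) - w \<bullet> g (p 0) = w \<bullet> D (p s) ((1 - 0) *\<^sub>R (x - y))"
    by auto
  then have "c \<le> w \<bullet> (g x - g y)"
    using bound[OF p_segment] by (simp add: p_def inner_diff_right)
  also have "\<dots> \<le> norm (g x - g y)"
    using norm_cauchy_schwarz[of w "g x - g y"] mult_right_mono[OF w, of "norm (g x - g y)"]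
    by simp
  finally show ?thesis .
qed

definition cone_around :: "'a::real_inner \<Rightarrow> real \<Rightarrow> 'a set" where
  "cone_around x0 c = {x. c * norm x < x0 \<bullet> x}"

lemma nonzero_if_in_cone_around: "x \<in> cone_around x0 c \<Longrightarrow> x \<noteq> 0"
  by (auto simp: cone_around_def)

lemma open_cone_around: "open (cone_around x0 c)"
  unfolding cone_around_def by (intro open_Collect_less continuous_intros)

lemma conic_cone_around: "conic (cone_around x0 c)"
  unfolding conic_def cone_around_def by (auto simp: mult.left_commute[of c])

lemma convex_cone_around:
  assumes "0 \<le> c"
  shows "convex (cone_around x0 c)"
proof (rule convexI)
  fix x y and u v :: real
  assume x: "x \<in> cone_around x0 c" and y: "y \<in> cone_around x0 c"
    and uv: "0 \<le> u" "0 \<le> v" "u + v = 1"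
  have "c * norm (u *\<^sub>R x + v *\<^sub>R y) \<le> u * (c * norm x) + v * (c * norm y)"
    using norm_triangle_ineq[of "u *\<^sub>R x" "v *\<^sub>R y"] assms uv
    by (smt (verit) mult_left_mono norm_scaleR abs_of_nonneg mult.left_commute distrib_left)
  also have "\<dots> < u * (x0 \<bullet> x) + v * (x0 \<bullet> y)"
  proof (cases "u = 0")
    case True
    then show ?thesis
      using y uv by (simp add: cone_around_def)
  next
    case False
    then have "u * (c * norm x) < u * (x0 \<bullet> x)"
      using x uv by (simp add: cone_around_def)
    moreover have "v * (c * norm y) \<le> v * (x0 \<bullet> y)"
      using y uv by (simp add: cone_around_def mult_left_mono)
    ultimately show ?thesis
      by linarith
  qed
  finally show "u *\<^sub>R x + v *\<^sub>R y \<in> cone_around x0 c"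
    by (simp add: cone_around_def inner_add_right)
qed

lemma center_in_cone_around: "norm x0 = 1 \<Longrightarrow> c < 1 \<Longrightarrow> x0 \<in> cone_around x0 c"
  by (simp add: cone_around_def dot_square_norm)

lemma dist_sgn_cone_around:
  assumes x0: "norm x0 = 1" and z: "z \<in> cone_around x0 c"
  shows "(dist (sgn z) x0)\<^sup>2 < 2 - 2 * c"
proof -
  have "z \<noteq> 0"
    using nonzero_if_in_cone_around[OF z] .
  have "sgn z \<bullet> x0 = x0 \<bullet> z / norm z"
    by (simp add: sgn_div_norm inner_commute divide_inverse_commute)
  then have "(dist (sgn z) x0)\<^sup>2 = 2 - 2 * (x0 \<bullet> z / norm z)"
    using dot_norm_neg[of "sgn z" x0] x0 \<open>z \<noteq> 0\<close> by (simp add: dist_norm norm_sgn)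
  moreover have "c < x0 \<bullet> z / norm z"
    using z \<open>z \<noteq> 0\<close> by (simp add: cone_around_def field_simps)
  ultimately show ?thesis
    by simp
qed

lemma norm_ge_on_segment_cone_around:
  assumes x0: "norm x0 = 1" and "0 \<le> c"
    and x: "x \<in> cone_around x0 c" and y: "y \<in> cone_around x0 c"
    and z: "z \<in> closed_segment y x"
  shows "c * min (norm x) (norm y) \<le> norm z"
proof -
  let ?\<rho> = "c * min (norm x) (norm y)"
  have "closed_segment y x \<subseteq> {z. x0 \<bullet> z \<ge> ?\<rho>}"
  proof (rule closed_segment_subset)
    show "x \<in> {z. x0 \<bullet> z \<ge> ?\<rho>}" "y \<in> {z. x0 \<bullet> z \<ge> ?\<rho>}"
      using x y \<open>0 \<le> c\<close> unfolding cone_around_def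
      by (smt (verit, best) mem_Collect_eq min.cobounded1 min.cobounded2 mult_left_mono)+
  qed (rule convex_halfspace_ge)
  then have "?\<rho> \<le> x0 \<bullet> z"
    using z by blast
  also have "\<dots> \<le> norm z"
    using norm_cauchy_schwarz[of x0 z] x0 by simp
  finally show ?thesis .
qed

lemma norm_diff_ge_positively_homogeneous_far:
  fixes g :: "'a::real_normed_vector \<Rightarrow> 'b::real_normed_vector"
  assumes hom: "positively_homogeneous k g" and k: "1 \<le> k"
    and lower: "a \<le> norm (g (sgn x))" and upper: "norm (g (sgn y)) \<le> 3 * a"
    and "y \<noteq> 0" and far: "6 * norm y \<le> norm x"
  shows "a / 4 * norm (x - y) * norm x powr (k - 1) \<le> norm (g x - g y)"
proof -
  have "x \<noteq> 0"
    using \<open>y \<noteq> 0\<close> far by auto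
  have "0 \<le> a"
    using upper norm_ge_zero[of "g (sgn y)"] by linarith
  have "norm (g y) = norm (g (sgn y)) * norm y powr k"
    using positively_homogeneous_sgn[OF hom \<open>y \<noteq> 0\<close>] by simp
  also have "\<dots> \<le> 3 * a * norm y powr k"
    using upper by (rule mult_right_mono) simp
  also have "\<dots> \<le> 3 * a * (norm x / 6) powr k"
    using far k \<open>0 \<le> a\<close> by (intro mult_left_mono powr_mono2) auto
  also have "\<dots> \<le> 3 * a * (norm x powr k / 6)"
  proof -
    have "6 \<le> (6::real) powr k"
      using powr_mono[OF k, of 6] by simp
    then have "norm x powr k / 6 powr k \<le> norm x powr k / 6"
      by (intro divide_left_mono) auto
    then have "(norm x / 6) powr k \<le> norm x powr k / 6"
      by (simp add: powr_divide)
    then show ?thesis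
      using \<open>0 \<le> a\<close> by (intro mult_left_mono) auto
  qed
  finally have "norm (g y) \<le> a / 2 * norm x powr k"
    by simp
  moreover have "a * norm x powr k \<le> norm (g (sgn x)) * norm x powr k"
    using lower by (rule mult_right_mono) simp
  moreover have "norm (g x) = norm (g (sgn x)) * norm x powr k"
    using positively_homogeneous_sgn[OF hom \<open>x \<noteq> 0\<close>] by simp
  ultimately have "a / 2 * norm x powr k \<le> norm (g x) - norm (g y)"
    by linarith
  have "norm (x - y) \<le> 2 * norm x"
    using norm_triangle_ineq4[of x y] far norm_ge_zero[of y] by linarith
  then have "a / 4 * norm (x - y) \<le> a / 2 * norm x"
    using mult_left_mono[of "norm (x - y)" "2 * norm x" "a / 4"] \<open>0 \<le> a\<close> by simp
  then have "a / 4 * norm (x - y) * norm x powr (k - 1) \<le> a / 2 * norm x * norm x powr (k - 1)"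
    by (rule mult_right_mono) simp
  also have "\<dots> = a / 2 * norm x powr k"
    using \<open>x \<noteq> 0\<close> by (simp add: powr_diff)
  also have "\<dots> \<le> norm (g x) - norm (g y)"
    by fact
  also have "\<dots> \<le> norm (g x - g y)"
    by (rule norm_triangle_ineq2)
  finally show ?thesis .
qed

lemma norm_diff_ge_homogeneous_hessian_segment:
  fixes grad :: "real^'n \<Rightarrow> real^'n" and hess :: "real^'n \<Rightarrow> real^'n^'n"
  assumes der: "\<And>z. z \<in> closed_segment y x \<Longrightarrow> (grad has_derivative (\<lambda>h. hess z *v h)) (at z)"
    and hess_hom: "\<And>v. positively_homogeneous (m - 2) (\<lambda>z. hess z *v v)" and m: "2 \<le> m"
    and below: "\<And>v. \<kappa> * norm v \<le> norm (H0 *v v)" and "0 \<le> \<kappa>"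
    and close: "\<And>z. z \<in> closed_segment y x \<Longrightarrow> norm (hess (sgn z) - H0) \<le> \<kappa> / 2"
    and away: "\<And>z. z \<in> closed_segment y x \<Longrightarrow> \<rho> \<le> norm z" and "0 < \<rho>"
  shows "\<kappa> / 2 * \<rho> powr (m - 2) * norm (x - y) \<le> norm (grad x - grad y)"
proof (rule norm_diff_ge_inner_derivative[OF der])
  let ?v = "x - y"
  show "norm (sgn (H0 *v ?v)) \<le> 1"
    by (simp add: norm_sgn)
  fix z
  assume z: "z \<in> closed_segment y x"
  then have "z \<noteq> 0"
    using away \<open>0 < \<rho>\<close> by fastforce
  have "\<kappa> / 2 * \<rho> powr (m - 2) * norm ?v = \<rho> powr (m - 2) * (\<kappa> / 2 * norm ?v)"
    by simp
  also have "\<dots> \<le> norm z powr (m - 2) * (\<kappa> / 2 * norm ?v)"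
    using away[OF z] \<open>0 < \<rho>\<close> m \<open>0 \<le> \<kappa>\<close> by (intro mult_right_mono powr_mono2) auto
  also have "\<dots> \<le> norm z powr (m - 2) * (sgn (H0 *v ?v) \<bullet> (hess (sgn z) *v ?v))"
    using inner_sgn_matrix_vector_ge[OF below close[OF z]] by (intro mult_left_mono) auto
  also have "\<dots> = sgn (H0 *v ?v) \<bullet> (hess z *v ?v)"
    using positively_homogeneous_sgn[OF hess_hom \<open>z \<noteq> 0\<close>, of ?v] by simp
  finally show "\<kappa> / 2 * \<rho> powr (m - 2) * norm ?v \<le> sgn (H0 *v ?v) \<bullet> (hess z *v ?v)" .
qed

locale homogeneous_gradient_on_cone =
  fixes grad :: "real^'n \<Rightarrow> real^'n" and hess :: "real^'n \<Rightarrow> real^'n^'n"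
    and m :: real and x0 :: "real^'n" and c \<kappa> a :: real
  assumes hess_deriv: "\<And>z. z \<noteq> 0 \<Longrightarrow> (grad has_derivative (\<lambda>h. hess z *v h)) (at z)"
    and grad_hom: "positively_homogeneous (m - 1) grad"
    and hess_hom: "\<And>v. positively_homogeneous (m - 2) (\<lambda>z. hess z *v v)"
    and m: "2 \<le> m"
    and x0: "norm x0 = 1"
    and c: "1 / 2 \<le> c"
    and hess_below: "\<And>v. \<kappa> * norm v \<le> norm (hess x0 *v v)"
    and \<kappa>: "0 \<le> \<kappa>"
    and hess_close: "\<And>z. z \<in> cone_around x0 c \<Longrightarrow> norm (hess (sgn z) - hess x0) \<le> \<kappa> / 2"
    and grad_lower: "\<And>z. z \<in> cone_around x0 c \<Longrightarrow> a \<le> norm (grad (sgn z))"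
    and grad_upper: "\<And>z. z \<in> cone_around x0 c \<Longrightarrow> norm (grad (sgn z)) \<le> 3 * a"
begin

definition gap_constant :: real where
  "gap_constant = min (a / 8) (\<kappa> / (4 * 12 powr (m - 2)))"

lemma gradient_gap_far:
  assumes x: "x \<in> cone_around x0 c" and y: "y \<in> cone_around x0 c"
    and far: "6 * norm y \<le> norm x"
  shows "a / 4 * norm (x - y) * norm x powr (m - 2) \<le> norm (grad x - grad y)"
  using norm_diff_ge_positively_homogeneous_far[OF grad_hom _ grad_lower[OF x] grad_upper[OF y]
      nonzero_if_in_cone_around[OF y] far] m
  by simp

lemma gradient_gap_near:
  assumes x: "x \<in> cone_around x0 c" and y: "y \<in> cone_around x0 c"
    and le: "norm y \<le> norm x" and near: "norm x < 6 * norm y"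
  shows "\<kappa> / (2 * 12 powr (m - 2)) * norm (x - y) * norm x powr (m - 2) \<le> norm (grad x - grad y)"
proof -
  have segment: "closed_segment y x \<subseteq> cone_around x0 c"
    using c by (intro closed_segment_subset x y convex_cone_around) auto
  have away: "norm x / 12 \<le> norm z" if "z \<in> closed_segment y x" for z
  proof -
    have "c * min (norm x) (norm y) \<le> norm z"
      using norm_ge_on_segment_cone_around[OF x0 _ x y that] c by simp
    moreover have "norm x / 12 \<le> c * norm y"
      using near c mult_right_mono[OF c, of "norm y"] by simp
    ultimately show ?thesis
      using le by (simp add: min_absorb2)
  qed
  have "0 < norm x"
    using nonzero_if_in_cone_around[OF x] by simp
  have "\<kappa> / 2 * (norm x / 12) powr (m - 2) * norm (x - y) \<le> norm (grad x - grad y)"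
  proof (rule norm_diff_ge_homogeneous_hessian_segment[OF _ hess_hom m hess_below \<kappa> _ away])
    fix z
    assume "z \<in> closed_segment y x"
    then have "z \<in> cone_around x0 c"
      using segment by blast
    then show "(grad has_derivative (\<lambda>h. hess z *v h)) (at z)"
      and "norm (hess (sgn z) - hess x0) \<le> \<kappa> / 2"
      using hess_deriv[OF nonzero_if_in_cone_around] hess_close by blast+
  qed (use \<open>0 < norm x\<close> in auto)
  then show ?thesis
    by (simp add: powr_divide field_simps)
qed

lemma gradient_gap_ordered:
  assumes x: "x \<in> cone_around x0 c" and y: "y \<in> cone_around x0 c"
    and le: "norm y \<le> norm x"
  shows "gap_constant * norm (x - y) * (norm x powr (m - 2) + norm y powr (m - 2))
           \<le> norm (grad x - grad y)"
proof -
  let ?d = "norm (x - y) * norm x powr (m - 2)"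
  have "0 \<le> a"
    using grad_lower[OF x] grad_upper[OF x] by linarith
  then have "0 \<le> gap_constant"
    using \<kappa> by (simp add: gap_constant_def)
  moreover have "norm y powr (m - 2) \<le> norm x powr (m - 2)"
    using le m by (intro powr_mono2) auto
  ultimately have "gap_constant * norm (x - y) * (norm x powr (m - 2) + norm y powr (m - 2))
      \<le> gap_constant * norm (x - y) * (2 * norm x powr (m - 2))"
    by (intro mult_left_mono) auto
  also have "\<dots> = 2 * gap_constant * ?d"
    by simp
  also have "\<dots> \<le> norm (grad x - grad y)"
    \<comment> \<open>For m > 2 the Hessian bound degenerates near the origin, so the mean value
      argument needs the segment from y to x to stay away from 0, i.e. |y| comparable to |x|.\<close>
  proof (cases "6 * norm y \<le> norm x")
    case True
    have "2 * gap_constant \<le> a / 4"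
      by (simp add: gap_constant_def)
    then have "2 * gap_constant * ?d \<le> a / 4 * ?d"
      by (rule mult_right_mono) simp
    then show ?thesis
      using gradient_gap_far[OF x y True] by (simp add: mult.assoc)
  next
    case False
    have "2 * gap_constant \<le> \<kappa> / (2 * 12 powr (m - 2))"
      by (simp add: gap_constant_def)
    then have "2 * gap_constant * ?d \<le> \<kappa> / (2 * 12 powr (m - 2)) * ?d"
      by (rule mult_right_mono) simp
    then show ?thesis
      using gradient_gap_near[OF x y le] False by (simp add: mult.assoc)
  qed
  finally show ?thesis .
qed

lemma gradient_gap:
  assumes x: "x \<in> cone_around x0 c" and y: "y \<in> cone_around x0 c"
  shows "gap_constant * norm (x - y) * (norm x powr (m - 2) + norm y powr (m - 2))
           \<le> norm (grad x - grad y)"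
proof (cases "norm y \<le> norm x")
  case True
  then show ?thesis
    using gradient_gap_ordered[OF x y] by blast
next
  case False
  then show ?thesis
    using gradient_gap_ordered[OF y x] by (simp add: norm_minus_commute add.commute)
qed


end

lemma homogeneous_gradient_on_small_cone:
  fixes grad :: "real^'n \<Rightarrow> real^'n" and hess :: "real^'n \<Rightarrow> real^'n^'n"
  assumes hess_deriv: "\<And>z. z \<noteq> 0 \<Longrightarrow> (grad has_derivative (\<lambda>h. hess z *v h)) (at z)"
    and hess_cont: "isCont hess x0"
    and grad_hom: "positively_homogeneous (m - 1) grad"
    and hess_hom: "\<And>v. positively_homogeneous (m - 2) (\<lambda>z. hess z *v v)"
    and m: "2 \<le> m" and x0: "norm x0 = 1"
    and hess_below: "\<And>v. \<kappa> * norm v \<le> norm (hess x0 *v v)" and "0 < \<kappa>"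
    and "grad x0 \<noteq> 0"
  obtains c where "c < 1"
    and "homogeneous_gradient_on_cone grad hess m x0 c \<kappa> (norm (grad x0) / 2)"
proof -
  let ?a = "norm (grad x0) / 2"
  have "x0 \<noteq> 0"
    using x0 by auto
  have "isCont grad x0"
    by (rule has_derivative_continuous[OF hess_deriv[OF \<open>x0 \<noteq> 0\<close>]])
  then have "\<forall>\<^sub>F u in nhds x0. dist (hess u) (hess x0) < \<kappa> / 2 \<and> dist (grad u) (grad x0) < ?a"
    using hess_cont \<open>0 < \<kappa>\<close> \<open>grad x0 \<noteq> 0\<close>
    by (intro eventually_conj tendstoD) (auto simp: isCont_def tendsto_at_iff_tendsto_nhds)
  then obtain \<eta> where "0 < \<eta>" and
    close: "\<And>u. dist u x0 < \<eta> \<Longrightarrow> dist (hess u) (hess x0) < \<kappa> / 2 \<and> dist (grad u) (grad x0) < ?a"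
    unfolding eventually_nhds_metric by blast
  define c where "c = max (1 / 2) (1 - \<eta>\<^sup>2 / 2)"
  have direction: "dist (sgn z) x0 < \<eta>" if "z \<in> cone_around x0 c" for z
  proof (rule power2_less_imp_less)
    have "1 - \<eta>\<^sup>2 / 2 \<le> c"
      by (simp add: c_def)
    then show "(dist (sgn z) x0)\<^sup>2 < \<eta>\<^sup>2"
      using dist_sgn_cone_around[OF x0 that] by linarith
  qed (use \<open>0 < \<eta>\<close> in simp)
  have "homogeneous_gradient_on_cone grad hess m x0 c \<kappa> ?a"
  proof
    show "1 / 2 \<le> c"
      by (simp add: c_def)
    fix z
    assume "z \<in> cone_around x0 c"
    then have "dist (hess (sgn z)) (hess x0) < \<kappa> / 2" "dist (grad (sgn z)) (grad x0) < ?a"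
      using close direction by auto
    moreover have "\<bar>norm (grad (sgn z)) - norm (grad x0)\<bar> \<le> norm (grad (sgn z) - grad x0)"
      by (rule norm_triangle_ineq3)
    ultimately show "norm (hess (sgn z) - hess x0) \<le> \<kappa> / 2"
      and "?a \<le> norm (grad (sgn z))" "norm (grad (sgn z)) \<le> 3 * ?a"
      by (auto simp: dist_norm abs_le_iff)
  qed (use hess_deriv grad_hom hess_hom m x0 hess_below \<open>0 < \<kappa>\<close> in auto)
  moreover have "c < 1"
    using \<open>0 < \<eta>\<close> by (simp add: c_def)
  ultimately show thesis
    using that by blast
qed

theorem proposition3p3:
  fixes \<mu> :: "real ^ 'n \<Rightarrow> real"
    and grad :: "real ^ 'n \<Rightarrow> real ^ 'n"
    and hess :: "real ^ 'n \<Rightarrow> real ^ 'n ^ 'n"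
    and m :: real
  assumes grad: "\<And>x. x \<noteq> 0 \<Longrightarrow> (\<mu> has_derivative (\<lambda>h. grad x \<bullet> h)) (at x)"
    and hess: "\<And>x. x \<noteq> 0 \<Longrightarrow> (grad has_derivative (\<lambda>h. hess x *v h)) (at x)"
    and hess_cont: "continuous_on (- {0}) hess"
    and hom: "\<And>x t. x \<noteq> 0 \<Longrightarrow> t > 0 \<Longrightarrow> \<mu> (t *\<^sub>R x) = t powr m * \<mu> x"
    and m: "m \<ge> 2"
    and nondeg: "\<And>x. norm x = 1 \<Longrightarrow> det (hess x) \<noteq> 0"
    and x0: "norm x0 = 1"
  shows "\<exists>\<Gamma> C. open \<Gamma> \<and> conic \<Gamma> \<and> x0 \<in> \<Gamma> \<and> C > 0 \<and>
           (\<forall>x\<in>\<Gamma>. \<forall>y\<in>\<Gamma>.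
              norm (grad x - grad y) \<ge> C * norm (x - y) * (norm x powr (m - 2) + norm y powr (m - 2)))"
proof -
  have grad_hom: "positively_homogeneous (m - 1) grad"
    using positively_homogeneous_gradient[OF positively_homogeneous_derivative[OF _ grad]] hom
    by (simp add: positively_homogeneous_def)
  have hess_hom: "\<And>v. positively_homogeneous (m - 2) (\<lambda>x. hess x *v v)"
    using positively_homogeneous_derivative[OF grad_hom hess] by simp
  have "x0 \<noteq> 0"
    using x0 by auto
  have "invertible (hess x0)"
    using nondeg[OF x0] by (simp add: invertible_det_nz)
  then obtain \<kappa> where "0 < \<kappa>" and hess_below: "\<And>v. \<kappa> * norm v \<le> norm (hess x0 *v v)"
    using linear_inj_bounded_below_pos[OF matrix_vector_mul_linear inj_matrix_vector_mult] by blast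
  have "hess x0 *v x0 = (m - 1) *\<^sub>R grad x0"
    by (rule positively_homogeneous_euler[OF grad_hom \<open>x0 \<noteq> 0\<close> hess[OF \<open>x0 \<noteq> 0\<close>]])
  then have "grad x0 \<noteq> 0"
    using hess_below[of x0] \<open>0 < \<kappa>\<close> x0 by auto
  moreover have "isCont hess x0"
    using hess_cont \<open>x0 \<noteq> 0\<close> by (simp add: continuous_on_eq_continuous_at open_Compl)
  ultimately obtain c where "c < 1"
    and cone: "homogeneous_gradient_on_cone grad hess m x0 c \<kappa> (norm (grad x0) / 2)"
    using homogeneous_gradient_on_small_cone[OF hess _ grad_hom hess_hom _ x0 hess_below] m \<open>0 < \<kappa>\<close>
    by auto
  interpret homogeneous_gradient_on_cone grad hess m x0 c \<kappa> "norm (grad x0) / 2"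
    by (rule cone)
  have "0 < gap_constant"
    using \<open>grad x0 \<noteq> 0\<close> \<open>0 < \<kappa>\<close> by (simp add: gap_constant_def)
  then show ?thesis
    using open_cone_around conic_cone_around center_in_cone_around[OF x0 \<open>c < 1\<close>] gradient_gap
    by blast
qed

end
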